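(* Let $\mathcal{G}=(\mathcal{V},\mathcal{E},\mathcal{W})$ be an undirected weighted graph, let $\mathcal{E}_-$ be the set of negative-weight edges and $\mathcal{E}_+$ the set of positive-weight edges, with $|\mathcal{E}_-|>1$, and assume $\mathcal{G}_+=(\mathcal{V},\mathcal{E}_+)$ (with its weights) is connected. For each $k=(u_k,v_k)\in\mathcal{E}_-$ let $P_k\subseteq\mathcal{E}_+$ be the set of edges $e\in\mathcal{E}_+$ for which there exists a path in $\mathcal{G}_+$ from $u_k$ to $v_k$ using $e$, and assume $P_i\cap P_j=\emptyset$ for all distinct $i,j\in\mathcal{E}_-$. Let $\mathcal{R}_k(\mathcal{G}_+)=\mathcal{R}_{u_kv_k}(\mathcal{G}_+)$. Then $L(\mathcal{G})$ is positive semi-definite if and only if $|\mathcal{W}(k)|\le \mathcal{R}_k(\mathcal{G}_+)^{-1}$ for every $k\in\mathcal{E}_-$ (i.e. $|W_-|\le \mathbf{R}^{-1}$ with $W_-$ the diagonal matrix of negative weights and $\mathbf{R}=\mathrm{diag}(\mathcal{R}_k(\mathcal{G}_+))_{k\in\mathcal{E}_-}$).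
   Context: Weights $\mathcal{W}:\mathcal{E}\to\mathbb{R}\setminus\{0\}$; with an arbitrary edge orientation the incidence matrix $E$ has in the column of edge $(i,j)$ entry $+1$ in row $i$, $-1$ in row $j$, $0$ elsewhere; $L(\mathcal{G})=EWE^T$ with $W$ the diagonal weight matrix. Paths are simple paths. For a weighted graph $\mathcal{H}$ on $\mathcal{V}$, the effective resistance between $u,v$ is $\mathcal{R}_{uv}(\mathcal{H})=(\mathbf{e}_u-\mathbf{e}_v)^TL^{\dagger}(\mathcal{H})(\mathbf{e}_u-\mathbf{e}_v)$, with $L^{\dagger}$ the Moore–Penrose pseudo-inverse and $\mathbf{e}_u$ the standard basis vector of node $u$. *)

theory Defs
  imports "HOL-Analysis.Analysis"
begin

text \<open>Vertices are the elements of a finite type 'n. An undirected weighted graph is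
given by a set of edges, each stored with an arbitrary orientation (u,v), u ~= v,
and a weight function W on edges.\<close>

definition wgraph :: "('n::finite \<times> 'n) set \<Rightarrow> ('n \<times> 'n \<Rightarrow> real) \<Rightarrow> bool" where
  "wgraph E W \<longleftrightarrow> (\<forall>(u,v)\<in>E. u \<noteq> v \<and> (v,u) \<notin> E \<and> W (u,v) \<noteq> 0)"

definition inc_col :: "'n::finite \<times> 'n \<Rightarrow> real ^ 'n" where
  "inc_col e = axis (fst e) 1 - axis (snd e) 1"

text \<open>L = E W E^T, written as the sum over the columns of E.\<close>
definition laplacian :: "('n::finite \<times> 'n) set \<Rightarrow> ('n \<times> 'n \<Rightarrow> real) \<Rightarrow> real ^ 'n ^ 'n" where
  "laplacian E W = (\<Sum>e\<in>E. W e *\<^sub>R (\<chi> i j. inc_col e $ i * inc_col e $ j))"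

definition psd :: "real ^ 'n ^ 'n \<Rightarrow> bool" where
  "psd A \<longleftrightarrow> (\<forall>x. 0 \<le> x \<bullet> (A *v x))"

definition is_pinv :: "real ^ 'n ^ 'n \<Rightarrow> real ^ 'n ^ 'n \<Rightarrow> bool" where
  "is_pinv A B \<longleftrightarrow> A ** B ** A = A \<and> B ** A ** B = B \<and>
     transpose (A ** B) = A ** B \<and> transpose (B ** A) = B ** A"

definition pinv :: "real ^ 'n ^ 'n \<Rightarrow> real ^ 'n ^ 'n" where
  "pinv A = (THE B. is_pinv A B)"

definition eff_res :: "('n::finite \<times> 'n) set \<Rightarrow> ('n \<times> 'n \<Rightarrow> real) \<Rightarrow> 'n \<Rightarrow> 'n \<Rightarrow> real" where
  "eff_res E W u v = (let d = axis u 1 - axis v 1 in d \<bullet> (pinv (laplacian E W) *v d))"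

definition adj :: "('n \<times> 'n) set \<Rightarrow> 'n \<Rightarrow> 'n \<Rightarrow> bool" where
  "adj F a b \<longleftrightarrow> (a,b) \<in> F \<or> (b,a) \<in> F"

definition is_path :: "('n \<times> 'n) set \<Rightarrow> 'n list \<Rightarrow> 'n \<Rightarrow> 'n \<Rightarrow> bool" where
  "is_path F p u v \<longleftrightarrow> p \<noteq> [] \<and> hd p = u \<and> last p = v \<and> distinct p \<and>
     (\<forall>i. Suc i < length p \<longrightarrow> adj F (p!i) (p!Suc i))"

definition uses_edge :: "'n list \<Rightarrow> 'n \<times> 'n \<Rightarrow> bool" where
  "uses_edge p e \<longleftrightarrow> (\<exists>i. Suc i < length p \<and> ((p!i, p!Suc i) = e \<or> (p!Suc i, p!i) = e))"

definition connected_graph :: "('n \<times> 'n) set \<Rightarrow> bool" where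
  "connected_graph F \<longleftrightarrow> (\<forall>u v. \<exists>p. is_path F p u v)"

definition path_edges :: "('n \<times> 'n) set \<Rightarrow> 'n \<times> 'n \<Rightarrow> ('n \<times> 'n) set" where
  "path_edges F k = {e\<in>F. \<exists>p. is_path F p (fst k) (snd k) \<and> uses_edge p e}"

end

theory Submission
  imports Defs
begin

text \<open>
  Writing b_k for the incidence column of an edge k, the Laplacian form
  splits as  x' L(G) x = x' L(G+) x + sum over negative edges k of W(k) (b_k' x)^2.
  For a negative edge k = (s,t) let phi_k = L(G+)^+ b_k, the potential of a unit
  current from s to t in G+; its energy b_k' phi_k is the effective resistance R_k.

  (1) Pseudo-inverse: for a connected positive graph, L + (averaging projection) is
      invertible, which yields L^+ and shows that L^+ inverts L on zero-sum vectors.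
  (2) Graph part: a unit s-t current only flows through edges lying on simple s-t
      paths (by a discrete maximum principle one descends strictly in potential from
      such an edge to t and ascends to s).  So if the path sets of negative edges k
      and l are disjoint, phi_k is constant between the ends of l: b_l' phi_k = 0.
  (3) Abstract criterion (locale orthogonal_potentials): given such mutually
      orthogonal potentials, the form is psd iff -W(k) R_k <= 1 for all k.
      Necessity evaluates the form at phi_k; sufficiency compares x with
      y = sum_k -W(k) (b_k' x) phi_k via  x'L(G+)x >= 2 y'L(G+)x - y'L(G+)y.
\<close>

section \<open>Incidence vectors and the Laplacian form\<close>

lemma inc_col_nth: "inc_col e $ a = (if a = fst e then 1 else 0) - (if a = snd e then 1 else 0)"
  by (simp add: inc_col_def axis_def)

lemma inner_inc_col: "inc_col e \<bullet> x = x $ fst e - x $ snd e"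
  by (simp add: inc_col_def inner_diff_left inner_axis')

lemma sum_inc_col: "(\<Sum>j\<in>UNIV. inc_col e $ j) = 0"
  by (simp add: inc_col_nth sum_subtractf)

definition lap_form :: "('n::finite \<times> 'n) set \<Rightarrow> ('n \<times> 'n \<Rightarrow> real) \<Rightarrow> real^'n \<Rightarrow> real^'n \<Rightarrow> real"
  where "lap_form F W x y = (\<Sum>e\<in>F. W e * (inc_col e \<bullet> x) * (inc_col e \<bullet> y))"

lemma laplacian_mult_vec_nth:
  "(laplacian F W *v y) $ a = (\<Sum>e\<in>F. W e * (inc_col e $ a * (inc_col e \<bullet> y)))"
proof -
  have "(laplacian F W *v y) $ a = (\<Sum>j\<in>UNIV. (\<Sum>e\<in>F. W e * (inc_col e $ a * inc_col e $ j)) * y $ j)"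
    by (simp add: laplacian_def matrix_vector_mult_def)
  also have "\<dots> = (\<Sum>e\<in>F. \<Sum>j\<in>UNIV. W e * inc_col e $ a * (inc_col e $ j * y $ j))"
    by (subst sum.swap) (simp add: sum_distrib_right sum_distrib_left mult_ac)
  finally show ?thesis
    by (simp add: inner_vec_def sum_distrib_left mult_ac)
qed

lemma laplacian_mult_vec: "laplacian F W *v y = (\<Sum>e\<in>F. (W e * (inc_col e \<bullet> y)) *\<^sub>R inc_col e)"
  by (simp add: vec_eq_iff laplacian_mult_vec_nth mult_ac)

lemma inner_laplacian: "x \<bullet> (laplacian F W *v y) = lap_form F W x y"
  by (simp add: laplacian_mult_vec inner_sum_right lap_form_def inner_commute mult_ac)

lemma lap_form_sym: "lap_form F W x y = lap_form F W y x"
  by (simp add: lap_form_def mult_ac)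

lemma lap_form_sum_left:
  "lap_form F W (\<Sum>k\<in>K. c k *\<^sub>R f k) y = (\<Sum>k\<in>K. c k * lap_form F W (f k) y)"
  by (cases "finite K")
     (simp_all add: lap_form_def inner_sum_right sum_distrib_left sum_distrib_right mult_ac sum.swap[of _ F])

lemma lap_form_diff:
  "lap_form F W (x - y) (x - y) = lap_form F W x x - 2 * lap_form F W y x + lap_form F W y y"
  by (simp add: lap_form_def inner_diff_right algebra_simps sum_subtractf sum.distrib sum_distrib_left)

lemma lap_form_sign_split:
  "lap_form E W x x = lap_form {e\<in>E. W e > 0} W x x + (\<Sum>k\<in>{e\<in>E. W e < 0}. W k * (inc_col k \<bullet> x)^2)"
proof -
  have "lap_form E W x x = (\<Sum>e\<in>{e\<in>E. W e > 0} \<union> {e\<in>E. W e < 0}. W e * (inc_col e \<bullet> x)^2)"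
    unfolding lap_form_def power2_eq_square mult.assoc by (rule sum.mono_neutral_right) auto
  then show ?thesis
    by (subst (asm) sum.union_disjoint) (auto simp: lap_form_def power2_eq_square mult.assoc)
qed

lemma psd_laplacian_iff:
  "psd (laplacian E W) \<longleftrightarrow> (\<forall>x. 0 \<le> lap_form {e\<in>E. W e > 0} W x x +
     (\<Sum>k\<in>{e\<in>E. W e < 0}. W k * (inc_col k \<bullet> x)^2))"
  unfolding psd_def inner_laplacian by (simp only: lap_form_sign_split[of E W])

context
  fixes F :: "('n::finite \<times> 'n) set" and W :: "'n \<times> 'n \<Rightarrow> real"
  assumes pos: "\<And>e. e \<in> F \<Longrightarrow> W e > 0"
begin

lemma lap_form_nonneg: "0 \<le> lap_form F W x x"
  unfolding lap_form_def mult.assoc by (intro sum_nonneg) (simp add: pos less_imp_le)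

lemma lap_form_zero_edge:
  assumes "lap_form F W x x = 0" and "e \<in> F"
  shows "inc_col e \<bullet> x = 0"
proof -
  have "\<forall>e\<in>F. W e * (inc_col e \<bullet> x) * (inc_col e \<bullet> x) = 0"
    using assms(1) unfolding lap_form_def
    by (subst (asm) sum_nonneg_eq_0_iff) (auto simp: pos mult.assoc less_imp_le)
  then show ?thesis using assms(2) pos[OF assms(2)] by auto
qed

lemma lap_form_zero_left:
  assumes "lap_form F W x x = 0"
  shows "lap_form F W x y = 0"
  unfolding lap_form_def using lap_form_zero_edge[OF assms] by (intro sum.neutral) simp

end

lemma adj_sym: "adj F a b = adj F b a"
  by (auto simp: adj_def)

lemma path_const:
  assumes p: "is_path F p u v" and step: "\<And>i. Suc i < length p \<Longrightarrow> f (p!i) = f (p!Suc i)"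
  shows "f u = f v"
proof -
  have "i < length p \<Longrightarrow> f (p!i) = f (p!0)" for i
    by (induction i) (use step in auto)
  moreover have "p \<noteq> []" "hd p = u" "last p = v" using p by (auto simp: is_path_def)
  ultimately show ?thesis
    by (metis diff_less hd_conv_nth last_conv_nth length_greater_0_conv zero_less_one)
qed

lemma connected_const:
  assumes c: "connected_graph F" and edge: "\<And>e. e \<in> F \<Longrightarrow> f (fst e) = f (snd e)"
  shows "f u = f v"
proof -
  obtain p where p: "is_path F p u v" using c by (auto simp: connected_graph_def)
  show ?thesis
  proof (rule path_const[OF p])
    fix i assume "Suc i < length p"
    then have "adj F (p!i) (p!Suc i)" using p by (auto simp: is_path_def)
    then show "f (p!i) = f (p!Suc i)" unfolding adj_def using edge by force
  qed
qed

section \<open>The Moore--Penrose pseudo-inverse\<close>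

lemma matrix_add_rdistrib: "((A::real^'n^'m) + B) ** C = A ** C + B ** C"
  by (vector matrix_matrix_mult_def sum.distrib algebra_simps)

lemma matrix_diff_rdistrib: "((A::real^'n^'m) - B) ** C = A ** C - B ** C"
  by (vector matrix_matrix_mult_def sum_subtractf algebra_simps)

lemma matrix_diff_ldistrib: "(A::real^'n^'m) ** (B - C) = A ** B - A ** C"
  by (vector matrix_matrix_mult_def sum_subtractf algebra_simps)

lemma transpose_diff: "transpose ((A::real^'n^'m) - B) = transpose A - transpose B"
  by (simp add: transpose_def vec_eq_iff)

lemma pinv_unique:
  fixes A B C :: "real^'n^'n"
  assumes b: "is_pinv A B" and c: "is_pinv A C"
  shows "B = C"
proof -
  have b1: "A ** B ** A = A" "B ** A ** B = B" "transpose (A ** B) = A ** B" "transpose (B ** A) = B ** A"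
    using b by (auto simp: is_pinv_def)
  have c1: "A ** C ** A = A" "C ** A ** C = C" "transpose (A ** C) = A ** C" "transpose (C ** A) = C ** A"
    using c by (auto simp: is_pinv_def)
  have tA1: "transpose A = transpose A ** transpose C ** transpose A"
    by (metis c1(1) matrix_transpose_mul matrix_mul_assoc)
  have tA2: "transpose A = transpose A ** transpose B ** transpose A"
    by (metis b1(1) matrix_transpose_mul matrix_mul_assoc)
  have "B = B ** transpose (A ** B)" using b1 by (simp add: matrix_mul_assoc)
  also have "\<dots> = B ** transpose B ** (transpose A ** transpose C ** transpose A)"
    using tA1 by (simp add: matrix_transpose_mul matrix_mul_assoc)
  also have "\<dots> = B ** transpose (A ** B) ** transpose (A ** C)"
    by (simp add: matrix_transpose_mul matrix_mul_assoc)
  also have "\<dots> = B ** A ** C" using b1 c1 by (simp add: matrix_mul_assoc)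
  finally have B: "B = B ** A ** C" .
  have "C = transpose (C ** A) ** C" using c1 by (simp add: matrix_mul_assoc)
  also have "\<dots> = (transpose A ** transpose B ** transpose A) ** transpose C ** C"
    using tA2 by (simp add: matrix_transpose_mul matrix_mul_assoc)
  also have "\<dots> = transpose (B ** A) ** transpose (C ** A) ** C"
    by (simp add: matrix_transpose_mul matrix_mul_assoc)
  also have "\<dots> = B ** A ** C" using b1 c1 by (simp add: matrix_mul_assoc) (metis c1(2) matrix_mul_assoc)
  finally show ?thesis using B by simp
qed

lemma pinv_eqI: "is_pinv A B \<Longrightarrow> pinv A = B"
  unfolding pinv_def by (rule the_equality) (auto intro: pinv_unique)

lemma pinv_from_shifted_inverse:
  fixes L P M :: "real^'n^'n"
  assumes PP: "P ** P = P" and tP: "transpose P = P"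
    and LP: "L ** P = 0" and PL: "P ** L = 0"
    and inv: "M ** (L + P) = mat 1"
  shows "pinv L = M - P" and "L ** (M - P) = mat 1 - P"
proof -
  have inv': "(L + P) ** M = mat 1" using inv matrix_left_right_inverse by blast
  have MP: "M ** P = P"
    by (metis inv matrix_mul_assoc matrix_add_rdistrib LP PP add_0 matrix_mul_lid)
  have PM: "P ** M = P"
    by (metis inv' matrix_mul_assoc matrix_add_ldistrib PL PP add_0 matrix_mul_rid)
  have L_M: "L ** M = mat 1 - P" using inv' PM by (simp add: matrix_add_rdistrib algebra_simps)
  have M_L: "M ** L = mat 1 - P" using inv MP by (simp add: matrix_add_ldistrib algebra_simps)
  show LB: "L ** (M - P) = mat 1 - P" by (simp add: matrix_diff_ldistrib L_M LP)
  have BL: "(M - P) ** L = mat 1 - P" by (simp add: matrix_diff_rdistrib M_L PL)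
  have "L ** (M - P) ** L = L" by (simp add: LB matrix_diff_rdistrib PL)
  moreover have "(M - P) ** L ** (M - P) = M - P"
    unfolding BL by (simp add: matrix_diff_rdistrib matrix_diff_ldistrib PM PP)
  ultimately have "is_pinv L (M - P)"
    unfolding is_pinv_def by (simp add: LB BL transpose_diff tP)
  then show "pinv L = M - P" by (rule pinv_eqI)
qed

section \<open>The pseudo-inverse of a connected positive Laplacian\<close>

definition avg_mat :: "real^'n^'n" where "avg_mat = (\<chi> i j. 1 / real CARD('n))"

text \<open>It replaces every coordinate by the mean, is a symmetric idempotent, and
  annihilates L from both sides (L kills constants, and the range of L has zero sum).\<close>
lemma avg_mat_vec: "avg_mat *v (x::real^'n) = (\<chi> i. (\<Sum>j\<in>UNIV. x$j) / real CARD('n))"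
  by (simp add: avg_mat_def matrix_vector_mult_def vec_eq_iff sum_divide_distrib)

lemma inner_avg_mat: "(x::real^'n) \<bullet> (avg_mat *v x) = (\<Sum>j\<in>UNIV. x$j)^2 / real CARD('n)"
  by (simp add: avg_mat_vec inner_vec_def power2_eq_square flip: sum_distrib_right sum_divide_distrib)

lemma avg_mat_idem: "avg_mat ** avg_mat = (avg_mat :: real^'n^'n)"
  by (rule matrix_eq[THEN iffD2]) (simp add: avg_mat_vec vec_eq_iff flip: matrix_vector_mul_assoc)

lemma avg_mat_transpose: "transpose avg_mat = (avg_mat :: real^'n^'n)"
  by (simp add: transpose_def avg_mat_def vec_eq_iff)

lemma laplacian_avg_mat: "laplacian F W ** avg_mat = 0"
  by (rule matrix_eq[THEN iffD2]) (simp add: laplacian_mult_vec avg_mat_vec inner_inc_col flip: matrix_vector_mul_assoc)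

lemma avg_mat_laplacian: "avg_mat ** laplacian F W = 0"
proof -
  have "(\<Sum>j\<in>UNIV. (laplacian F W *v x) $ j) = (\<chi> i. 1) \<bullet> (laplacian F W *v x)" for x
    by (simp add: inner_vec_def)
  then have "(\<Sum>j\<in>UNIV. (laplacian F W *v x) $ j) = 0" for x
    by (simp add: inner_laplacian lap_form_def inner_inc_col)
  then show ?thesis
    by (intro matrix_eq[THEN iffD2]) (simp add: avg_mat_vec vec_eq_iff flip: matrix_vector_mul_assoc)
qed

context
  fixes F :: "('n::finite \<times> 'n) set" and W :: "'n \<times> 'n \<Rightarrow> real"
  assumes pos: "\<And>e. e \<in> F \<Longrightarrow> W e > 0" and conn: "connected_graph F"
begin

text \<open>On a connected positive graph the kernel of L consists of the constants, which
  the averaging projection detects; hence L + avg_mat is injective.\<close>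
lemma laplacian_avg_mat_inj: "inj ((*v) (laplacian F W + avg_mat))"
  unfolding linear_inj_iff_eq_0[OF matrix_vector_mul_linear]
proof (intro allI impI)
  fix x :: "real^'n" assume "(laplacian F W + avg_mat) *v x = 0"
  then have "lap_form F W x x + (\<Sum>j\<in>UNIV. x$j)^2 / real CARD('n) = 0"
    by (metis inner_zero_right inner_add_right inner_avg_mat inner_laplacian matrix_vector_mult_add_rdistrib)
  moreover have "0 \<le> (\<Sum>j\<in>UNIV. x$j)^2 / real CARD('n)" by simp
  moreover have "0 \<le> lap_form F W x x" by (rule lap_form_nonneg[of F W x, OF pos])
  ultimately have zero: "lap_form F W x x = 0" and "(\<Sum>j\<in>UNIV. x$j)^2 / real CARD('n) = 0"
    by linarith+
  then have sum0: "(\<Sum>j\<in>UNIV. x$j) = 0" by simp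
  have const: "x $ i = x $ j" for i j
    by (rule connected_const[OF conn]) (use lap_form_zero_edge[of F W, OF pos zero] in \<open>simp add: inner_inc_col\<close>)
  have "(\<Sum>j\<in>UNIV. x$j) = (\<Sum>j\<in>(UNIV::'n set). x$i)" for i
    by (rule sum.cong[OF refl]) (rule const)
  then have "(\<Sum>j\<in>UNIV. x$j) = real CARD('n) * x $ i" for i
    by simp
  then show "x = 0" using sum0 by (simp add: vec_eq_iff)
qed

lemma laplacian_times_pinv: "laplacian F W ** pinv (laplacian F W) = mat 1 - avg_mat"
proof -
  obtain M where "M ** (laplacian F W + avg_mat) = mat 1"
    using laplacian_avg_mat_inj matrix_left_invertible_injective by blast
  from pinv_from_shifted_inverse[OF avg_mat_idem avg_mat_transpose laplacian_avg_mat avg_mat_laplacian this]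
  show ?thesis by simp
qed

lemma laplacian_pinv_solves:
  assumes "(\<Sum>j\<in>UNIV. b$j) = 0"
  shows "laplacian F W *v (pinv (laplacian F W) *v b) = b"
  using assms by (simp add: matrix_vector_mul_assoc laplacian_times_pinv
      matrix_vector_mult_diff_rdistrib avg_mat_vec vec_eq_iff)

end

section \<open>Unit currents flow only along simple paths\<close>

lemma inc_col_term:
  "inc_col (x,y) $ a * (inc_col (x,y) \<bullet> \<phi>) =
     (if a = x then \<phi>$a - \<phi>$y else if a = y then \<phi>$a - \<phi>$x else 0)"
  by (auto simp: inc_col_nth inner_inc_col)

lemma laplacian_uminus: "laplacian F W *v (- \<phi>) = - (laplacian F W *v \<phi>)"
  by (simp add: laplacian_mult_vec inner_minus_right sum_negf)

definition descending :: "('n \<times> 'n) set \<Rightarrow> real^'n \<Rightarrow> 'n list \<Rightarrow> bool" where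
  "descending F \<phi> p \<longleftrightarrow> successively (\<lambda>x y. adj F x y \<and> \<phi>$x > \<phi>$y) p"

lemma descending_distinct: "descending F \<phi> p \<Longrightarrow> distinct p"
proof -
  assume "descending F \<phi> p"
  then have "successively (\<lambda>x y. \<phi>$x > \<phi>$y) p"
    unfolding descending_def by (rule successively_mono) simp
  then have "sorted_wrt (\<lambda>x y. \<phi>$x > \<phi>$y) p"
    by (subst (asm) successively_conv_sorted_wrt) (auto simp: transp_def)
  then show "distinct p" by (induction p) auto
qed

lemma descending_uminus_rev: "descending F (- \<phi>) p \<Longrightarrow> descending F \<phi> (rev p)"
  unfolding descending_def successively_rev by (erule successively_mono) (auto simp: adj_sym)

context
  fixes F :: "('n::finite \<times> 'n) set" and W :: "'n \<times> 'n \<Rightarrow> real"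
  assumes pos: "\<And>e. e \<in> F \<Longrightarrow> W e > 0"
begin

lemma laplacian_at_local_min:
  assumes low: "\<And>c. adj F a c \<Longrightarrow> \<phi>$a \<le> \<phi>$c"
  shows "(laplacian F W *v \<phi>) $ a \<le> 0"
    and "adj F a c \<Longrightarrow> \<phi>$a < \<phi>$c \<Longrightarrow> (laplacian F W *v \<phi>) $ a < 0"
proof -
  let ?t = "\<lambda>e. W e * (inc_col e $ a * (inc_col e \<bullet> \<phi>))"
  have edge_term: "?t e \<le> 0" if "e \<in> F" for e
  proof -
    obtain x y where e: "e = (x,y)" by (cases e)
    have "adj F a y" if "a = x" using \<open>e \<in> F\<close> e that by (auto simp: adj_def)
    moreover have "adj F a x" if "a = y" using \<open>e \<in> F\<close> e that by (auto simp: adj_def)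
    ultimately show ?thesis
      using pos[OF \<open>e \<in> F\<close>] low by (auto simp: e inc_col_term mult_nonneg_nonpos)
  qed
  then show "(laplacian F W *v \<phi>) $ a \<le> 0"
    unfolding laplacian_mult_vec_nth by (rule sum_nonpos)
  assume "adj F a c" "\<phi>$a < \<phi>$c"
  then obtain e0 where e0: "e0 \<in> F" "e0 = (a,c) \<or> e0 = (c,a)" and "a \<noteq> c"
    by (auto simp: adj_def)
  then have "?t e0 < 0"
    using pos[OF e0(1)] \<open>\<phi>$a < \<phi>$c\<close> by (auto simp: inc_col_term mult_pos_neg)
  moreover have "sum ?t (F - {e0}) \<le> 0" using edge_term by (intro sum_nonpos) simp
  ultimately show "(laplacian F W *v \<phi>) $ a < 0"
    unfolding laplacian_mult_vec_nth using e0(1) by (simp add: sum.remove)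
qed

lemma lower_neighbour:
  assumes "0 < (laplacian F W *v \<phi>) $ a \<or>
           (0 \<le> (laplacian F W *v \<phi>) $ a \<and> (\<exists>c. adj F c a \<and> \<phi>$a < \<phi>$c))"
  shows "\<exists>d. adj F a d \<and> \<phi>$d < \<phi>$a"
  using assms laplacian_at_local_min[of a \<phi>] by (metis adj_sym not_le)

lemma descent_to_sink:
  assumes L: "laplacian F W *v \<phi> = inc_col (s,t)" and "s \<noteq> t"
  shows "a = s \<or> (\<exists>c. adj F c a \<and> \<phi>$a < \<phi>$c) \<Longrightarrow>
    \<exists>p. p \<noteq> [] \<and> hd p = a \<and> last p = t \<and> descending F \<phi> p"
proof (induction a rule: measure_induct_rule[of "\<lambda>a. card {x. \<phi>$x < \<phi>$a}"])
  case (less a)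
  show ?case
  proof (cases "a = t")
    case True
    then show ?thesis by (intro exI[of _ "[t]"]) (simp add: descending_def)
  next
    case False
    then have "0 < (laplacian F W *v \<phi>) $ a \<or> (0 \<le> (laplacian F W *v \<phi>) $ a \<and> a \<noteq> s)"
      using \<open>s \<noteq> t\<close> by (simp add: L inc_col_nth)
    then obtain d where d: "adj F a d" "\<phi>$d < \<phi>$a"
      using lower_neighbour less.prems by blast
    then have "card {x. \<phi>$x < \<phi>$d} < card {x. \<phi>$x < \<phi>$a}"
      by (intro psubset_card_mono) force+
    then obtain p where p: "p \<noteq> []" "hd p = d" "last p = t" "descending F \<phi> p"
      using less.IH[of d] d by blast
    then obtain p' where "p = d # p'" by (cases p) simp_all
    then show ?thesis
      using p d by (intro exI[of _ "a # p"]) (simp add: descending_def)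
  qed
qed

text \<open>Every edge across which the potential drops lies on a simple s-t path: descend
  from its lower end to t, and ascend (descend in -phi) from its upper end to s.\<close>
lemma current_edge_on_path:
  assumes L: "laplacian F W *v \<phi> = inc_col (s,t)" and "s \<noteq> t"
    and xy: "adj F x y" "\<phi>$y < \<phi>$x"
  shows "\<exists>p i. is_path F p s t \<and> Suc i < length p \<and> p!i = x \<and> p!Suc i = y"
proof -
  obtain q where q: "q \<noteq> []" "hd q = y" "last q = t" "descending F \<phi> q"
    using descent_to_sink[OF L \<open>s \<noteq> t\<close>, of y] xy by blast
  have L': "laplacian F W *v (- \<phi>) = inc_col (t,s)"
    by (simp add: laplacian_uminus L inc_col_def)
  obtain r where r: "r \<noteq> []" "hd r = x" "last r = s" "descending F (- \<phi>) r"
    using descent_to_sink[OF L', of x] \<open>s \<noteq> t\<close> xy by (fastforce simp: adj_sym)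
  obtain r' where rr: "r = x # r'" using r by (cases r) simp_all
  obtain q' where qq: "q = y # q'" using q by (cases q) simp_all
  define p where "p = rev r @ q"
  have desc: "descending F \<phi> p"
    using descending_uminus_rev[OF r(4)] q(4) xy
    unfolding p_def descending_def successively_append_iff by (simp add: rr qq)
  have "is_path F p s t"
    unfolding is_path_def using descending_distinct[OF desc] desc r q
    by (simp add: p_def hd_rev descending_def successively_conv_nth)
  moreover have "Suc (length r') < length p" "p ! length r' = x" "p ! Suc (length r') = y"
    by (simp_all add: p_def rr qq nth_append)
  ultimately show ?thesis by blast
qed

lemma current_edge_in_path_edges:
  assumes L: "laplacian F W *v \<phi> = inc_col (s,t)" and "s \<noteq> t"
    and e: "e \<in> F" and drop: "\<phi>$(fst e) \<noteq> \<phi>$(snd e)"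
  shows "e \<in> path_edges F (s,t)"
proof -
  obtain a b where ab: "e = (a,b)" by (cases e)
  have "adj F a b" "adj F b a" using e ab by (auto simp: adj_def)
  then obtain p i where "is_path F p s t" "Suc i < length p"
      "(p!i, p!Suc i) = e \<or> (p!Suc i, p!i) = e"
    using current_edge_on_path[OF L \<open>s \<noteq> t\<close>] drop ab by (cases "\<phi>$b < \<phi>$a") force+
  then show ?thesis using e unfolding path_edges_def uses_edge_def by auto
qed

lemma current_orthogonal:
  assumes conn: "connected_graph F"
    and L: "laplacian F W *v \<phi> = inc_col k" and "fst k \<noteq> snd k"
    and disj: "path_edges F l \<inter> path_edges F k = {}"
  shows "inc_col l \<bullet> \<phi> = 0"
proof -
  obtain p where p: "is_path F p (fst l) (snd l)" using conn by (auto simp: connected_graph_def)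
  have "\<phi> $ fst l = \<phi> $ snd l"
  proof (rule path_const[OF p])
    fix i assume i: "Suc i < length p"
    then have "adj F (p!i) (p!Suc i)" using p by (auto simp: is_path_def)
    then obtain e where e: "e \<in> F" "e = (p!i, p!Suc i) \<or> e = (p!Suc i, p!i)"
      unfolding adj_def by blast
    then have "e \<in> path_edges F l" using i p unfolding path_edges_def uses_edge_def by auto
    then have "e \<notin> path_edges F (fst k, snd k)" using disj by auto
    then have "\<phi>$(fst e) = \<phi>$(snd e)"
      using current_edge_in_path_edges[of \<phi> "fst k" "snd k" e] L \<open>fst k \<noteq> snd k\<close> e(1) by auto
    then show "\<phi>$(p!i) = \<phi>$(p!Suc i)" using e(2) by auto
  qed
  then show ?thesis by (simp add: inner_inc_col)
qed

end

section \<open>A positivity criterion for rank-one perturbations\<close>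

lemma sum_eq_single_term:
  assumes "finite A" "k \<in> A" "\<And>l. l \<in> A \<Longrightarrow> l \<noteq> k \<Longrightarrow> g l = 0"
  shows "sum g A = g k"
  using sum.mono_neutral_left[of A "{k}" g] assms by auto

text \<open>The quantity b k' phi k plays the role of the effective resistance.\<close>
locale orthogonal_potentials =
  fixes F K :: "('n::finite \<times> 'n) set" and W :: "'n \<times> 'n \<Rightarrow> real"
    and b \<phi> :: "'n \<times> 'n \<Rightarrow> real^'n"
  assumes pos: "\<And>e. e \<in> F \<Longrightarrow> W e > 0"
    and neg: "\<And>k. k \<in> K \<Longrightarrow> W k < 0"
    and potential: "\<And>k y. k \<in> K \<Longrightarrow> lap_form F W (\<phi> k) y = b k \<bullet> y"
    and orthogonal: "\<And>k l. k \<in> K \<Longrightarrow> l \<in> K \<Longrightarrow> k \<noteq> l \<Longrightarrow> b l \<bullet> \<phi> k = 0"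
begin

lemma resistance_eq_energy: "k \<in> K \<Longrightarrow> b k \<bullet> \<phi> k = lap_form F W (\<phi> k) (\<phi> k)"
  by (simp add: potential)

text \<open>A nonzero b k has positive resistance: zero energy would make phi k orthogonal
  to b k with respect to the form, forcing b k' b k = 0.\<close>
lemma resistance_pos:
  assumes k: "k \<in> K" and "b k \<noteq> 0"
  shows "0 < b k \<bullet> \<phi> k"
proof -
  have "b k \<bullet> \<phi> k \<noteq> 0"
  proof
    assume "b k \<bullet> \<phi> k = 0"
    then have "lap_form F W (\<phi> k) (\<phi> k) = 0" by (simp add: resistance_eq_energy[OF k])
    then have "lap_form F W (\<phi> k) (b k) = 0" using lap_form_zero_left pos by blast
    then show False using \<open>b k \<noteq> 0\<close> by (simp add: potential[OF k])
  qed
  moreover have "0 \<le> b k \<bullet> \<phi> k" by (simp add: resistance_eq_energy[OF k] lap_form_nonneg[of F W, OF pos])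
  ultimately show ?thesis by simp
qed

text \<open>Necessity: evaluating the form at phi k gives R + W(k) R^2 \<ge> 0.\<close>
lemma psd_imp_resistance_bound:
  assumes psd: "\<And>x. 0 \<le> lap_form F W x x + (\<Sum>l\<in>K. W l * (b l \<bullet> x)^2)"
    and k: "k \<in> K"
  shows "- W k * (b k \<bullet> \<phi> k) \<le> 1"
proof -
  define R where "R = b k \<bullet> \<phi> k"
  have "(\<Sum>l\<in>K. W l * (b l \<bullet> \<phi> k)^2) = W k * R^2"
    unfolding R_def by (rule sum_eq_single_term) (simp_all add: k orthogonal)
  then have "0 \<le> R * (1 + W k * R)"
    using psd[of "\<phi> k"] resistance_eq_energy[OF k] by (simp add: R_def power2_eq_square algebra_simps)
  moreover have "0 \<le> R" using resistance_eq_energy[OF k] lap_form_nonneg[of F W, OF pos] by (simp add: R_def)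
  ultimately show ?thesis
    by (cases "R = 0") (simp_all add: R_def zero_le_mult_iff)
qed

text \<open>Sufficiency: with y = sum_k t_k phi_k, t_k = -W(k) (b k' x), the form gives
  x'Lx \<ge> 2 y'Lx - y'Ly, where y'Lx = S := sum_k -W(k) (b k' x)^2 and
  y'Ly = sum_k t_k^2 R_k \<le> S by the bound.\<close>
lemma resistance_bound_imp_psd:
  assumes bound: "\<And>k. k \<in> K \<Longrightarrow> - W k * (b k \<bullet> \<phi> k) \<le> 1"
  shows "0 \<le> lap_form F W x x + (\<Sum>k\<in>K. W k * (b k \<bullet> x)^2)"
proof -
  define t where "t k = - W k * (b k \<bullet> x)" for k
  define y where "y = (\<Sum>k\<in>K. t k *\<^sub>R \<phi> k)"
  define S where "S = (\<Sum>k\<in>K. - W k * (b k \<bullet> x)^2)"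
  have yx: "lap_form F W y x = S"
    unfolding y_def lap_form_sum_left S_def
    by (rule sum.cong) (simp_all add: potential t_def power2_eq_square)
  have b_y: "b k \<bullet> y = t k * (b k \<bullet> \<phi> k)" if k: "k \<in> K" for k
    unfolding y_def inner_sum_right inner_scaleR_right
    by (rule sum_eq_single_term) (simp_all add: k orthogonal)
  have "lap_form F W y y = (\<Sum>k\<in>K. t k * (b k \<bullet> y))"
    by (subst (1) y_def) (simp add: lap_form_sum_left potential)
  also have "\<dots> = (\<Sum>k\<in>K. (t k)^2 * (b k \<bullet> \<phi> k))"
    by (rule sum.cong) (simp_all add: b_y power2_eq_square)
  also have "\<dots> \<le> S"
    unfolding S_def
  proof (rule sum_mono)
    fix k assume k: "k \<in> K"
    have "(t k)^2 * (b k \<bullet> \<phi> k) = (- W k * (b k \<bullet> x)^2) * (- W k * (b k \<bullet> \<phi> k))"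
      by (simp add: t_def power2_eq_square)
    also have "\<dots> \<le> - W k * (b k \<bullet> x)^2"
      using mult_left_mono[OF bound[OF k], of "- W k * (b k \<bullet> x)^2"] neg[OF k]
      by (simp add: mult_nonpos_nonneg)
    finally show "(t k)^2 * (b k \<bullet> \<phi> k) \<le> - W k * (b k \<bullet> x)^2" .
  qed
  finally have "lap_form F W y y \<le> S" .
  moreover have "0 \<le> lap_form F W (x - y) (x - y)" by (rule lap_form_nonneg[of F W, OF pos])
  ultimately have "S \<le> lap_form F W x x" using yx by (simp add: lap_form_diff)
  then show ?thesis by (simp add: S_def sum_negf)
qed

theorem psd_iff_resistance_bound:
  "(\<forall>x. 0 \<le> lap_form F W x x + (\<Sum>k\<in>K. W k * (b k \<bullet> x)^2)) \<longleftrightarrow>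
   (\<forall>k\<in>K. - W k * (b k \<bullet> \<phi> k) \<le> 1)"
  using psd_imp_resistance_bound resistance_bound_imp_psd by blast

lemma resistance_bound_iff:
  assumes "k \<in> K" and "b k \<noteq> 0"
  shows "\<bar>W k\<bar> \<le> inverse (b k \<bullet> \<phi> k) \<longleftrightarrow> - W k * (b k \<bullet> \<phi> k) \<le> 1"
  using resistance_pos[OF assms] neg[OF assms(1)] by (simp add: field_simps)

end

lemma eff_res_pinv:
  "eff_res F W (fst k) (snd k) = inc_col k \<bullet> (pinv (laplacian F W) *v inc_col k)"
  by (simp add: eff_res_def Let_def inc_col_def)

lemma unit_current_potentials:
  fixes F K :: "('n::finite \<times> 'n) set"
  assumes pos: "\<And>e. e \<in> F \<Longrightarrow> W e > 0" and neg: "\<And>k. k \<in> K \<Longrightarrow> W k < 0"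
    and conn: "connected_graph F" and loopfree: "\<And>k. k \<in> K \<Longrightarrow> fst k \<noteq> snd k"
    and disj: "\<And>k l. k \<in> K \<Longrightarrow> l \<in> K \<Longrightarrow> k \<noteq> l \<Longrightarrow> path_edges F l \<inter> path_edges F k = {}"
  shows "orthogonal_potentials F K W inc_col (\<lambda>k. pinv (laplacian F W) *v inc_col k)"
proof
  fix k
  have current: "laplacian F W *v (pinv (laplacian F W) *v inc_col k) = inc_col k"
    by (rule laplacian_pinv_solves[OF pos conn sum_inc_col])
  show "lap_form F W (pinv (laplacian F W) *v inc_col k) y = inc_col k \<bullet> y" for y
  proof -
    have "lap_form F W (pinv (laplacian F W) *v inc_col k) y =
        y \<bullet> (laplacian F W *v (pinv (laplacian F W) *v inc_col k))"
      by (simp add: inner_laplacian lap_form_sym)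
    then show ?thesis by (simp add: current inner_commute)
  qed
  show "inc_col l \<bullet> (pinv (laplacian F W) *v inc_col k) = 0"
    if "k \<in> K" "l \<in> K" "k \<noteq> l" for l
    using current_orthogonal[OF pos conn current loopfree disj] that by blast
qed (use pos neg in auto)

theorem theorem3:
  fixes E :: "('n::finite \<times> 'n) set" and W :: "'n \<times> 'n \<Rightarrow> real"
  defines "Eneg \<equiv> {e\<in>E. W e < 0}"
      and "Epos \<equiv> {e\<in>E. W e > 0}"
  assumes "wgraph E W"
      and "card Eneg > 1"
      and "connected_graph Epos"
      and "\<And>i j. i \<in> Eneg \<Longrightarrow> j \<in> Eneg \<Longrightarrow> i \<noteq> j \<Longrightarrow>
             path_edges Epos i \<inter> path_edges Epos j = {}"
  shows "psd (laplacian E W) \<longleftrightarrow>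
         (\<forall>k\<in>Eneg. \<bar>W k\<bar> \<le> inverse (eff_res Epos W (fst k) (snd k)))"
proof -
  define \<phi> where "\<phi> k = pinv (laplacian Epos W) *v inc_col k" for k
  have loopfree: "fst k \<noteq> snd k" if "k \<in> Eneg" for k
    using \<open>wgraph E W\<close> that by (auto simp: wgraph_def Eneg_def)
  interpret orthogonal_potentials Epos Eneg W inc_col \<phi>
    unfolding \<phi>_def
    by (rule unit_current_potentials[OF _ _ \<open>connected_graph Epos\<close> loopfree assms(6)])
       (simp_all add: Epos_def Eneg_def)
  have nonzero: "inc_col k \<noteq> 0" if "k \<in> Eneg" for k
    using loopfree[OF that] by (auto simp: vec_eq_iff inc_col_nth)
  have "psd (laplacian E W) \<longleftrightarrow>
      (\<forall>x. 0 \<le> lap_form Epos W x x + (\<Sum>k\<in>Eneg. W k * (inc_col k \<bullet> x)^2))"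
    unfolding Epos_def Eneg_def by (rule psd_laplacian_iff)
  also have "\<dots> \<longleftrightarrow> (\<forall>k\<in>Eneg. - W k * (inc_col k \<bullet> \<phi> k) \<le> 1)"
    by (rule psd_iff_resistance_bound)
  also have "\<dots> \<longleftrightarrow> (\<forall>k\<in>Eneg. \<bar>W k\<bar> \<le> inverse (eff_res Epos W (fst k) (snd k)))"
    using resistance_bound_iff nonzero by (simp add: eff_res_pinv \<phi>_def)
  finally show ?thesis .
qed

end
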